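(* For all $n\ge1$, $$a_{\{0102,0112,0120\}}(n)=a_{\{0102,0112,0121\}}(n)=a_{\{0112,0120,0121\}}(n)=2^{n-1}+\binom{n}{3}.$$
   Context: An ascent in an integer sequence $s_1\cdots s_m$ is an index $j$ with $s_j<s_{j+1}$; $\mathrm{asc}$ denotes the number of ascents. An ascent sequence is a sequence $x_1\cdots x_n$ of nonnegative integers with $x_1=0$ and $x_i\le 1+\mathrm{asc}(x_1\cdots x_{i-1})$ for all $i\ge2$. The reduction $\mathrm{red}(w)$ of an integer sequence $w$ replaces the $i$-th smallest distinct letter of $w$ by $i-1$; a pattern is a reduced sequence. A sequence $x$ contains a pattern $p=p_1\cdots p_k$ if there are indices $i_1<\cdots<i_k$ with $\mathrm{red}(x_{i_1}\cdots x_{i_k})=p$; otherwise $x$ avoids $p$. For a finite set $P$ of patterns, $a_P(n)$ denotes the number of ascent sequences of length $n$ avoiding every pattern in $P$. *)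

theory Defs
  imports Main
begin

definition asc :: "nat list \<Rightarrow> nat" where
  "asc s = card {j. Suc j < length s \<and> s ! j < s ! Suc j}"

(* ascent sequence: x_1 = 0 and x_i \<le> 1 + asc(x_1 ... x_{i-1}) for i \<ge> 2 (0-indexed below) *)
definition ascent_seq :: "nat list \<Rightarrow> bool" where
  "ascent_seq x \<longleftrightarrow> x \<noteq> [] \<and> x ! 0 = 0 \<and>
     (\<forall>i. 0 < i \<and> i < length x \<longrightarrow> x ! i \<le> 1 + asc (take i x))"

(* reduction: the i-th smallest distinct letter becomes i-1 *)
definition red :: "nat list \<Rightarrow> nat list" where
  "red w = map (\<lambda>a. card {b \<in> set w. b < a}) w"

definition contains :: "nat list \<Rightarrow> nat list \<Rightarrow> bool" where
  "contains x p \<longleftrightarrow> (\<exists>s \<in> set (subseqs x). red s = p)"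

definition avoids :: "nat list \<Rightarrow> nat list \<Rightarrow> bool" where
  "avoids x p \<longleftrightarrow> \<not> contains x p"

definition a_count :: "nat list set \<Rightarrow> nat \<Rightarrow> nat" where
  "a_count P n = card {x. length x = n \<and> ascent_seq x \<and> (\<forall>p \<in> P. avoids x p)}"

end

theory Submission
  imports Defs "HOL-Library.Sublist"
begin

text \<open>
  Each of the three pattern sets consists of patterns with three distinct letters, so every ascent
  sequence over the letters 0 and 1 avoids them; there are 2^(n-1) of these. An avoider that
  uses a letter \<ge> 2 has a rigid shape determined by three positions 1 \<le> a < b < c \<le> n,
  which accounts for the (n choose 3) remaining sequences. The shape is established by
  building the sequence letter by letter: appending a letter to a binary word or to a word of the
  shape either produces one of the forbidden patterns or again yields a binary word or a word of
  the shape. That all these words are ascent sequences follows from their restricted growth, since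
  a restricted growth word has at least as many ascents as its largest letter.
\<close>

section \<open>Patterns of length four\<close>

lemma subseq_iff_sorted_indices:
  "subseq s x \<longleftrightarrow>
     (\<exists>ks. sorted_wrt (<) ks \<and> (\<forall>i\<in>set ks. i < length x) \<and> s = map ((!) x) ks)"
proof
  assume "subseq s x"
  then show "\<exists>ks. sorted_wrt (<) ks \<and> (\<forall>i\<in>set ks. i < length x) \<and> s = map ((!) x) ks"
  proof (induction rule: list_emb.induct)
    case (list_emb_Nil ys)
    show ?case by (intro exI[of _ "[]"]) auto
  next
    case (list_emb_Cons xs ys y)
    then obtain ks where "sorted_wrt (<) ks" "\<forall>i\<in>set ks. i < length ys" "xs = map ((!) ys) ks"
      by blast
    then show ?case by (intro exI[of _ "map Suc ks"]) (auto simp: sorted_wrt_map)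
  next
    case (list_emb_Cons2 x y xs ys)
    then obtain ks where "sorted_wrt (<) ks" "\<forall>i\<in>set ks. i < length ys" "xs = map ((!) ys) ks"
      by blast
    with list_emb_Cons2.hyps show ?case
      by (intro exI[of _ "0 # map Suc ks"]) (auto simp: sorted_wrt_map)
  qed
next
  assume "\<exists>ks. sorted_wrt (<) ks \<and> (\<forall>i\<in>set ks. i < length x) \<and> s = map ((!) x) ks"
  then obtain ks where ks: "sorted_wrt (<) ks" "\<forall>i\<in>set ks. i < length x" "s = map ((!) x) ks"
    by blast
  then have "subseq ks [0..<length x]"
    by (intro sorted_subset_imp_subseq) auto
  then have "subseq (map ((!) x) ks) (map ((!) x) [0..<length x])"
    by (rule subseq_map)
  with ks show "subseq s x" by (simp add: map_nth)
qed

lemma contains_length4: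
  "contains x [p0, p1, p2, p3] \<longleftrightarrow> (\<exists>i j k l. i < j \<and> j < k \<and> k < l \<and> l < length x \<and>
     red [x!i, x!j, x!k, x!l] = [p0, p1, p2, p3])" (is "_ \<longleftrightarrow> ?indices")
proof
  assume "contains x [p0, p1, p2, p3]"
  then obtain s where "subseq s x" and red_s: "red s = [p0, p1, p2, p3]"
    by (auto simp: contains_def)
  then obtain ks where ks: "sorted_wrt (<) ks" "\<forall>i\<in>set ks. i < length x" "s = map ((!) x) ks"
    using subseq_iff_sorted_indices by blast
  with red_s have red_ks: "red (map ((!) x) ks) = [p0, p1, p2, p3]" by simp
  have "length ks = length (red (map ((!) x) ks))" by (simp add: red_def)
  with red_ks have "length ks = 4" by simp
  then obtain i j k l where "ks = [i, j, k, l]"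
    by (auto simp: numeral_eq_Suc length_Suc_conv)
  with ks red_ks show ?indices by auto
next
  assume ?indices
  then obtain i j k l where "i < j" "j < k" "k < l" "l < length x"
    and red_ijkl: "red (map ((!) x) [i, j, k, l]) = [p0, p1, p2, p3]"
    by auto
  then have "subseq (map ((!) x) [i, j, k, l]) x"
    unfolding subseq_iff_sorted_indices by (intro exI[of _ "[i, j, k, l]"]) auto
  with red_ijkl show "contains x [p0, p1, p2, p3]"
    unfolding contains_def by (metis in_set_subseqs)
qed

lemma avoids_snoc: "avoids (x @ [v]) p \<Longrightarrow> avoids x p"
  unfolding avoids_def contains_def using subseq_rev_drop_many by fastforce

lemma avoids_snoc_red_neq:
  assumes "avoids (x @ [v]) [p0, p1, p2, p3]" "i < j" "j < k" "k < length x"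
  shows "red [x!i, x!j, x!k, v] \<noteq> [p0, p1, p2, p3]"
proof
  assume "red [x!i, x!j, x!k, v] = [p0, p1, p2, p3]"
  with assms(2-4) have "contains (x @ [v]) [p0, p1, p2, p3]"
    unfolding contains_length4
    by (intro exI[of _ i] exI[of _ j] exI[of _ k] exI[of _ "length x"]) (simp add: nth_append)
  with assms(1) show False by (simp add: avoids_def)
qed

lemma red_nth_less_iff:
  assumes "i < length s" "j < length s"
  shows "red s ! i < red s ! j \<longleftrightarrow> s ! i < s ! j"
proof
  assume "s ! i < s ! j"
  then have "{b \<in> set s. b < s ! i} \<subseteq> {b \<in> set s. b < s ! j}"
    "s ! i \<in> {b \<in> set s. b < s ! j} - {b \<in> set s. b < s ! i}"
    using assms(1) by auto
  then have "{b \<in> set s. b < s ! i} \<subset> {b \<in> set s. b < s ! j}"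
    by blast
  then have "card {b \<in> set s. b < s ! i} < card {b \<in> set s. b < s ! j}"
    by (rule psubset_card_mono[rotated]) simp
  then show "red s ! i < red s ! j" using assms by (simp add: red_def)
next
  assume "red s ! i < red s ! j"
  show "s ! i < s ! j"
  proof (rule ccontr)
    assume "\<not> s ! i < s ! j"
    then have "{b \<in> set s. b < s ! j} \<subseteq> {b \<in> set s. b < s ! i}" by auto
    then have "card {b \<in> set s. b < s ! j} \<le> card {b \<in> set s. b < s ! i}"
      by (rule card_mono[rotated]) simp
    with \<open>red s ! i < red s ! j\<close> show False using assms by (simp add: red_def)
  qed
qed

lemma red_nth_eq_iff:
  assumes "i < length s" "j < length s"
  shows "red s ! i = red s ! j \<longleftrightarrow> s ! i = s ! j"
  using red_nth_less_iff[OF assms] red_nth_less_iff[OF assms(2,1)] by (metis neq_iff)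

lemma red_0102_iff: "red [a, b, c, d] = [0, 1, 0, 2] \<longleftrightarrow> a = c \<and> a < b \<and> b < d"
proof
  assume "red [a, b, c, d] = [0, 1, 0, 2]"
  then show "a = c \<and> a < b \<and> b < d"
    using red_nth_eq_iff[of 0 "[a, b, c, d]" 2] red_nth_less_iff[of 0 "[a, b, c, d]" 1]
      red_nth_less_iff[of 1 "[a, b, c, d]" 3] by simp
next
  assume "a = c \<and> a < b \<and> b < d"
  then have "{y \<in> {a, b, c, d}. y < a} = {}" "{y \<in> {a, b, c, d}. y < b} = {a}"
    "{y \<in> {a, b, c, d}. y < d} = {a, b}"
    by auto
  with \<open>a = c \<and> a < b \<and> b < d\<close> show "red [a, b, c, d] = [0, 1, 0, 2]" by (simp add: red_def)
qed

lemma red_0112_iff: "red [a, b, c, d] = [0, 1, 1, 2] \<longleftrightarrow> a < b \<and> b = c \<and> c < d"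
proof
  assume "red [a, b, c, d] = [0, 1, 1, 2]"
  then show "a < b \<and> b = c \<and> c < d"
    using red_nth_eq_iff[of 1 "[a, b, c, d]" 2] red_nth_less_iff[of 0 "[a, b, c, d]" 1]
      red_nth_less_iff[of 2 "[a, b, c, d]" 3] by simp
next
  assume "a < b \<and> b = c \<and> c < d"
  then have "{y \<in> {a, b, c, d}. y < a} = {}" "{y \<in> {a, b, c, d}. y < b} = {a}"
    "{y \<in> {a, b, c, d}. y < d} = {a, b}"
    by auto
  with \<open>a < b \<and> b = c \<and> c < d\<close> show "red [a, b, c, d] = [0, 1, 1, 2]" by (simp add: red_def)
qed

lemma red_0120_iff: "red [a, b, c, d] = [0, 1, 2, 0] \<longleftrightarrow> a = d \<and> a < b \<and> b < c"
proof
  assume "red [a, b, c, d] = [0, 1, 2, 0]"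
  then show "a = d \<and> a < b \<and> b < c"
    using red_nth_eq_iff[of 0 "[a, b, c, d]" 3] red_nth_less_iff[of 0 "[a, b, c, d]" 1]
      red_nth_less_iff[of 1 "[a, b, c, d]" 2] by simp
next
  assume "a = d \<and> a < b \<and> b < c"
  then have "{y \<in> {a, b, c, d}. y < a} = {}" "{y \<in> {a, b, c, d}. y < b} = {a}"
    "{y \<in> {a, b, c, d}. y < c} = {a, b}"
    by auto
  with \<open>a = d \<and> a < b \<and> b < c\<close> show "red [a, b, c, d] = [0, 1, 2, 0]" by (simp add: red_def)
qed

lemma red_0121_iff: "red [a, b, c, d] = [0, 1, 2, 1] \<longleftrightarrow> a < b \<and> b = d \<and> b < c"
proof
  assume "red [a, b, c, d] = [0, 1, 2, 1]"
  then show "a < b \<and> b = d \<and> b < c"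
    using red_nth_eq_iff[of 1 "[a, b, c, d]" 3] red_nth_less_iff[of 0 "[a, b, c, d]" 1]
      red_nth_less_iff[of 1 "[a, b, c, d]" 2] by simp
next
  assume "a < b \<and> b = d \<and> b < c"
  then have "{y \<in> {a, b, c, d}. y < a} = {}" "{y \<in> {a, b, c, d}. y < b} = {a}"
    "{y \<in> {a, b, c, d}. y < c} = {a, b}"
    by auto
  with \<open>a < b \<and> b = d \<and> b < c\<close> show "red [a, b, c, d] = [0, 1, 2, 1]" by (simp add: red_def)
qed

lemma avoids_0102_iff:
  "avoids x [0, 1, 0, 2] \<longleftrightarrow> \<not> (\<exists>i j k l. i < j \<and> j < k \<and> k < l \<and> l < length x \<and>
     x!i = x!k \<and> x!i < x!j \<and> x!j < x!l)"
  by (simp only: avoids_def contains_length4 red_0102_iff)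

lemma avoids_0112_iff:
  "avoids x [0, 1, 1, 2] \<longleftrightarrow> \<not> (\<exists>i j k l. i < j \<and> j < k \<and> k < l \<and> l < length x \<and>
     x!i < x!j \<and> x!j = x!k \<and> x!k < x!l)"
  by (simp only: avoids_def contains_length4 red_0112_iff)

lemma avoids_0120_iff:
  "avoids x [0, 1, 2, 0] \<longleftrightarrow> \<not> (\<exists>i j k l. i < j \<and> j < k \<and> k < l \<and> l < length x \<and>
     x!i = x!l \<and> x!i < x!j \<and> x!j < x!k)"
  by (simp only: avoids_def contains_length4 red_0120_iff)

lemma avoids_0121_iff:
  "avoids x [0, 1, 2, 1] \<longleftrightarrow> \<not> (\<exists>i j k l. i < j \<and> j < k \<and> k < l \<and> l < length x \<and>
     x!i < x!j \<and> x!j = x!l \<and> x!j < x!k)"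
  by (simp only: avoids_def contains_length4 red_0121_iff)

lemma contains_imp_card_set_le:
  assumes "contains x p"
  shows "card (set p) \<le> card (set x)"
proof -
  obtain s where "subseq s x" and red_s: "red s = p"
    using assms by (auto simp: contains_def)
  have "card (set p) \<le> card (set s)"
    unfolding red_s[symmetric] red_def set_map by (rule card_image_le) simp
  also have "card (set s) \<le> card (set x)"
    using list_emb_set[OF \<open>subseq s x\<close>] by (intro card_mono) auto
  finally show ?thesis .
qed

section \<open>Ascents and restricted growth\<close>

lemma asc_le_card:
  assumes "finite A" "\<And>j. Suc j < length x \<Longrightarrow> x!j < x!Suc j \<Longrightarrow> j \<in> A"
  shows "asc x \<le> card A"
  unfolding asc_def using assms by (intro card_mono) auto

lemma asc_snoc:
  assumes "x \<noteq> []"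
  shows "asc (x @ [v]) = asc x + (if last x < v then 1 else 0)"
proof -
  let ?A = "{j. Suc j < length x \<and> x!j < x!Suc j}"
  have "Suc j < length (x @ [v]) \<and> (x @ [v])!j < (x @ [v])!Suc j
      \<longleftrightarrow> j \<in> ?A \<or> (j = length x - 1 \<and> last x < v)" for j
  proof (cases "Suc j < length x")
    case True
    then show ?thesis by (auto simp: nth_append)
  next
    case False
    show ?thesis
    proof (cases "Suc j = length x")
      case True
      then have "j = length x - 1" by simp
      with True assms have "(x @ [v]) ! j = last x" "(x @ [v]) ! Suc j = v"
        by (simp_all add: nth_append last_conv_nth)
      with True show ?thesis by auto
    next
      case False
      with \<open>\<not> Suc j < length x\<close> assms show ?thesis by (cases x) auto
    qed
  qed
  then have "{j. Suc j < length (x @ [v]) \<and> (x @ [v])!j < (x @ [v])!Suc j}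
      = (if last x < v then insert (length x - 1) ?A else ?A)"
    by auto
  moreover have "length x - 1 \<notin> ?A" by auto
  moreover have "finite ?A" by (rule finite_subset[of _ "{..<length x}"]) auto
  ultimately show ?thesis by (simp add: asc_def)
qed

lemma ascent_seq_snocD:
  assumes "ascent_seq (x @ [v])" "x \<noteq> []"
  shows "ascent_seq x" "v \<le> 1 + asc x"
proof -
  have bound: "(x @ [v]) ! i \<le> 1 + asc (take i (x @ [v]))" if "0 < i" "i \<le> length x" for i
    using assms(1) that unfolding ascent_seq_def by simp
  have "x ! i \<le> 1 + asc (take i x)" if "0 < i" "i < length x" for i
    using bound[of i] that by (simp add: nth_append)
  moreover have "x ! 0 = 0"
    using assms unfolding ascent_seq_def by (simp add: nth_append)
  ultimately show "ascent_seq x"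
    using assms(2) unfolding ascent_seq_def by blast
  show "v \<le> 1 + asc x"
    using bound[of "length x"] assms(2) by simp
qed

definition restricted_growth :: "nat list \<Rightarrow> bool" where
  "restricted_growth x \<longleftrightarrow>
     x \<noteq> [] \<and> x ! 0 = 0 \<and> (\<forall>i. 0 < i \<and> i < length x \<longrightarrow> (\<exists>j<i. x ! i \<le> x ! j + 1))"

lemma restricted_growth_take:
  assumes "restricted_growth x" "0 < i"
  shows "restricted_growth (take i x)"
proof -
  have "\<exists>j<k. take i x ! k \<le> take i x ! j + 1" if "0 < k" "k < length (take i x)" for k
  proof -
    have "k < length x" using that by simp
    with assms(1) \<open>0 < k\<close> obtain j where "j < k" "x ! k \<le> x ! j + 1"
      unfolding restricted_growth_def by blast
    with that show ?thesis by (intro exI[of _ j]) auto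
  qed
  with assms show ?thesis unfolding restricted_growth_def by auto
qed

lemma Max_le_asc: "restricted_growth x \<Longrightarrow> Max (set x) \<le> asc x"
proof (induction x rule: rev_induct)
  case Nil
  then show ?case by (simp add: restricted_growth_def)
next
  case (snoc v x)
  show ?case
  proof (cases "x = []")
    case True
    with snoc.prems show ?thesis by (simp add: restricted_growth_def)
  next
    case False
    have "restricted_growth x"
      using restricted_growth_take[OF snoc.prems, of "length x"] False by simp
    with snoc.IH have IH: "Max (set x) \<le> asc x" .
    obtain j where "j < length x" "v \<le> x ! j + 1"
      using snoc.prems False spec[of _ "length x"] by (auto simp: restricted_growth_def nth_append)
    moreover have "x ! j \<le> Max (set x)"
      using \<open>j < length x\<close> by simp
    ultimately have v_le: "v \<le> Max (set x) + 1"
      by linarith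
    have Max_snoc: "Max (set (x @ [v])) = max (Max (set x)) v"
      using False by (simp add: max.commute)
    show ?thesis
    proof (cases "Max (set x) < v")
      case True
      moreover have "last x \<le> Max (set x)" using False by simp
      ultimately have "asc (x @ [v]) = asc x + 1"
        using asc_snoc[OF False] by simp
      with IH v_le Max_snoc show ?thesis by linarith
    next
      case False
      moreover have "asc x \<le> asc (x @ [v])"
        using asc_snoc[OF \<open>x \<noteq> []\<close>] by simp
      ultimately show ?thesis using IH Max_snoc by linarith
    qed
  qed
qed

lemma restricted_growth_map_upt:
  assumes "0 < n" "f 0 = 0" "\<And>i. 0 < i \<Longrightarrow> i < n \<Longrightarrow> \<exists>j<i. f i \<le> f j + 1"
  shows "restricted_growth (map f [0..<n])"
proof -
  have "\<exists>j<i. map f [0..<n] ! i \<le> map f [0..<n] ! j + 1" if "0 < i" "i < n" for i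
  proof -
    from assms(3)[OF that] obtain j where "j < i" "f i \<le> f j + 1" by blast
    with that show ?thesis by (intro exI[of _ j]) simp
  qed
  moreover have "map f [0..<n] \<noteq> []" "map f [0..<n] ! 0 = 0" using assms(1,2) by simp_all
  ultimately show ?thesis unfolding restricted_growth_def by simp
qed

lemma restricted_growth_imp_ascent_seq:
  assumes "restricted_growth x"
  shows "ascent_seq x"
proof -
  have "x ! i \<le> 1 + asc (take i x)" if "0 < i" "i < length x" for i
  proof -
    have "\<exists>j<i. x ! i \<le> x ! j + 1"
      using assms that by (simp add: restricted_growth_def)
    then obtain j where "j < i" "x ! i \<le> x ! j + 1" by blast
    moreover have "x ! j \<in> set (take i x)"
      using \<open>j < i\<close> that nth_mem[of j "take i x"] by simp
    then have "x ! j \<le> Max (set (take i x))"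
      by (rule Max_ge[OF finite_set])
    moreover have "Max (set (take i x)) \<le> asc (take i x)"
      using restricted_growth_take[OF assms \<open>0 < i\<close>] by (rule Max_le_asc)
    ultimately show ?thesis by linarith
  qed
  moreover have "x \<noteq> []" "x ! 0 = 0"
    using assms by (simp_all add: restricted_growth_def)
  ultimately show ?thesis unfolding ascent_seq_def by blast
qed

section \<open>Binary words and words indexed by increasing triples\<close>

text \<open>For n = 0 membership depends on the unspecified value [] ! 0; only n \<ge> 1 is used.\<close>

definition binary_words :: "nat \<Rightarrow> nat list set" where
  "binary_words n = {x. length x = n \<and> x ! 0 = 0 \<and> set x \<subseteq> {0, 1}}"

lemma finite_binary_words: "finite (binary_words n)"
proof (rule finite_subset)
  show "binary_words n \<subseteq> {x. set x \<subseteq> {0, 1} \<and> length x = n}"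
    by (auto simp: binary_words_def)
qed (simp add: finite_lists_length_eq)

lemma card_binary_words: "card (binary_words (Suc m)) = 2 ^ m"
proof -
  have "binary_words (Suc m) = (#) 0 ` {xs. set xs \<subseteq> {0, 1} \<and> length xs = m}"
    by (auto simp: binary_words_def image_def length_Suc_conv)
  moreover have "card ((#) 0 ` {xs. set xs \<subseteq> {0, 1::nat} \<and> length xs = m}) = 2 ^ m"
    by (subst card_image) (auto simp: card_lists_length_eq numeral_2_eq_2)
  ultimately show ?thesis by simp
qed

lemma binary_words_nth: "x \<in> binary_words n \<Longrightarrow> i < n \<Longrightarrow> x ! i = 0 \<or> x ! i = 1"
  unfolding binary_words_def using nth_mem by fastforce

lemma binary_words_restricted_growth:
  assumes "x \<in> binary_words n" "0 < n"
  shows "restricted_growth x"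
  using assms binary_words_nth[OF assms(1)] by (fastforce simp: binary_words_def restricted_growth_def)

lemma binary_words_avoids:
  assumes "x \<in> binary_words n" "3 \<le> card (set p)"
  shows "avoids x p"
proof -
  have "card (set x) \<le> 2"
    using assms(1) card_mono[of "{0, 1::nat}" "set x"] by (simp add: binary_words_def)
  with assms(2) show ?thesis
    using contains_imp_card_set_le[of x p] by (auto simp: avoids_def)
qed

lemma binary_words_snoc:
  "x \<in> binary_words n \<Longrightarrow> 0 < n \<Longrightarrow> v \<le> 1 \<Longrightarrow> x @ [v] \<in> binary_words (Suc n)"
  by (auto simp: binary_words_def nth_append)

lemma binary_words_snoc_avoiding_0112:
  assumes x: "x \<in> binary_words n" and v: "2 \<le> v" "v \<le> 1 + asc x"
    and avoid: "avoids (x @ [v]) [0, 1, 1, 2]"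
  obtains q where "0 < q" "q < n" "x ! q = 1" "\<And>i. i < n \<Longrightarrow> i \<noteq> q \<Longrightarrow> x ! i = 0" "v = 2"
proof -
  have len: "length x = n" and x0: "x ! 0 = 0" using x by (auto simp: binary_words_def)
  have "asc x \<noteq> 0" using v by linarith
  then obtain j where "Suc j < n" "x ! j < x ! Suc j"
    unfolding asc_def len by (metis (no_types, lifting) Collect_empty_eq card.empty)
  then have q: "0 < Suc j" "Suc j < n" "x ! Suc j = 1"
    using binary_words_nth[OF x, of "Suc j"] by auto
  have single_one: "i = r" if "0 < i" "i \<le> r" "r < n" "x ! i = 1" "x ! r = 1" for i r
  proof (rule ccontr)
    assume "i \<noteq> r"
    with that v have "red [x ! 0, x ! i, x ! r, v] = [0, 1, 1, 2]"
      unfolding red_0112_iff by (simp add: x0)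
    moreover have "red [x ! 0, x ! i, x ! r, v] \<noteq> [0, 1, 1, 2]"
      using avoids_snoc_red_neq[OF avoid, of 0 i r] that \<open>i \<noteq> r\<close> len by simp
    ultimately show False by simp
  qed
  have zero: "x ! i = 0" if "i < n" "i \<noteq> Suc j" for i
  proof (rule ccontr)
    assume "x ! i \<noteq> 0"
    with binary_words_nth[OF x \<open>i < n\<close>] have "x ! i = 1" by simp
    from \<open>x ! i \<noteq> 0\<close> x0 have "0 < i" by (cases i) auto
    with \<open>x ! i = 1\<close> single_one[of i "Suc j"] single_one[of "Suc j" i] q that show False
      by (cases "i < Suc j") auto
  qed
  have "asc x \<le> card {j}"
  proof (rule asc_le_card)
    fix k assume "Suc k < length x" "x ! k < x ! Suc k"
    then show "k \<in> {j}" using zero[of "Suc k"] len by fastforce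
  qed simp
  with v have "v = 2" by simp
  with q zero show thesis using that by blast
qed

lemma binary_words_snoc_avoiding_0102_0112:
  assumes x: "x \<in> binary_words n" and v: "2 \<le> v" "v \<le> 1 + asc x"
    and avoid: "avoids (x @ [v]) [0, 1, 0, 2]" "avoids (x @ [v]) [0, 1, 1, 2]"
  shows "v = 2" "x ! (n - 1) = 1" "\<And>i. i < n - 1 \<Longrightarrow> x ! i = 0"
proof -
  obtain q where q: "0 < q" "q < n" "x ! q = 1" "\<And>i. i < n \<Longrightarrow> i \<noteq> q \<Longrightarrow> x ! i = 0"
    and "v = 2"
    using binary_words_snoc_avoiding_0112[OF x v avoid(2)] by blast
  have len: "length x = n" and x0: "x ! 0 = 0" using x by (auto simp: binary_words_def)
  have "q = n - 1"
  proof (rule ccontr)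
    assume "q \<noteq> n - 1"
    with q have "Suc q < n" "x ! Suc q = 0" by auto
    with q \<open>v = 2\<close> x0 have "red [x ! 0, x ! q, x ! Suc q, v] = [0, 1, 0, 2]"
      unfolding red_0102_iff by simp
    moreover have "red [x ! 0, x ! q, x ! Suc q, v] \<noteq> [0, 1, 0, 2]"
      using avoids_snoc_red_neq[OF avoid(1), of 0 q "Suc q"] q \<open>Suc q < n\<close> len by simp
    ultimately show False by simp
  qed
  with q \<open>v = 2\<close> show "v = 2" "x ! (n - 1) = 1" "\<And>i. i < n - 1 \<Longrightarrow> x ! i = 0"
    by auto
qed

definition increasing_pairs :: "nat \<Rightarrow> (nat \<times> nat) set" where
  "increasing_pairs n = {(a, b). 1 \<le> a \<and> a < b \<and> b \<le> n}"

definition increasing_triples :: "nat \<Rightarrow> (nat \<times> nat \<times> nat) set" where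
  "increasing_triples n = {(a, b, c). 1 \<le> a \<and> a < b \<and> b < c \<and> c \<le> n}"

lemma finite_increasing_pairs: "finite (increasing_pairs n)"
  by (rule finite_subset[of _ "{..n} \<times> {..n}"]) (auto simp: increasing_pairs_def)

lemma finite_increasing_triples: "finite (increasing_triples n)"
  by (rule finite_subset[of _ "{..n} \<times> {..n} \<times> {..n}"]) (auto simp: increasing_triples_def)

lemma card_increasing_pairs: "card (increasing_pairs n) = n choose 2"
proof (induction n)
  case 0
  have "increasing_pairs 0 = {}" by (auto simp: increasing_pairs_def)
  then show ?case by simp
next
  case (Suc n)
  have split: "increasing_pairs (Suc n) = increasing_pairs n \<union> (\<lambda>a. (a, Suc n)) ` {1..n}"
    by (auto simp: increasing_pairs_def)
  have "card (increasing_pairs (Suc n))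
      = card (increasing_pairs n) + card ((\<lambda>a. (a, Suc n)) ` {1..n})"
    unfolding split
    by (rule card_Un_disjoint[OF finite_increasing_pairs]) (auto simp: increasing_pairs_def)
  also have "card ((\<lambda>a. (a, Suc n)) ` {1..n}) = n"
    by (subst card_image) (auto simp: inj_on_def)
  finally show ?case using Suc by (simp add: numeral_2_eq_2)
qed

lemma card_increasing_triples: "card (increasing_triples n) = n choose 3"
proof (induction n)
  case 0
  have "increasing_triples 0 = {}" by (auto simp: increasing_triples_def)
  then show ?case by simp
next
  case (Suc n)
  have split: "increasing_triples (Suc n)
      = increasing_triples n \<union> (\<lambda>(a, b). (a, b, Suc n)) ` increasing_pairs n"
    by (auto simp: increasing_triples_def increasing_pairs_def image_def)
  have "card (increasing_triples (Suc n))
      = card (increasing_triples n) + card ((\<lambda>(a, b). (a, b, Suc n)) ` increasing_pairs n)"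
    unfolding split
    by (rule card_Un_disjoint[OF finite_increasing_triples finite_imageI[OF finite_increasing_pairs]])
      (auto simp: increasing_triples_def increasing_pairs_def)
  also have "card ((\<lambda>(a, b). (a, b, Suc n)) ` increasing_pairs n) = card (increasing_pairs n)"
    by (rule card_image) (auto simp: inj_on_def)
  finally show ?case
    using Suc by (simp add: card_increasing_pairs numeral_3_eq_3 numeral_2_eq_2)
qed

definition triple_words :: "(nat \<Rightarrow> nat \<Rightarrow> nat \<Rightarrow> nat \<Rightarrow> nat) \<Rightarrow> nat \<Rightarrow> nat list set" where
  "triple_words f n = (\<lambda>(a, b, c). map (f a b c) [0..<n]) ` increasing_triples n"

lemma card_triple_words:
  assumes "inj_on (\<lambda>(a, b, c). map (f a b c) [0..<n]) (increasing_triples n)"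
  shows "card (triple_words f n) = n choose 3"
  using card_image[OF assms] by (simp add: triple_words_def card_increasing_triples)

lemma finite_triple_words: "finite (triple_words f n)"
  unfolding triple_words_def using finite_increasing_triples by (rule finite_imageI)

lemma triple_wordsE:
  assumes "x \<in> triple_words f n"
  obtains a b c where "1 \<le> a" "a < b" "b < c" "c \<le> n" "x = map (f a b c) [0..<n]"
  using assms by (auto simp: triple_words_def increasing_triples_def)

lemma triple_wordsI:
  "1 \<le> a \<Longrightarrow> a < b \<Longrightarrow> b < c \<Longrightarrow> c \<le> n \<Longrightarrow> map (f a b c) [0..<n] \<in> triple_words f n"
  by (force simp: triple_words_def increasing_triples_def)

lemma inj_on_triple_wordsI:
  assumes "\<And>a b c a' b' c'. 1 \<le> a \<Longrightarrow> a < b \<Longrightarrow> b < c \<Longrightarrow> c \<le> n \<Longrightarrow>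
    1 \<le> a' \<Longrightarrow> a' < b' \<Longrightarrow> b' < c' \<Longrightarrow> c' \<le> n \<Longrightarrow>
    (\<And>i. i < n \<Longrightarrow> f a b c i = f a' b' c' i) \<Longrightarrow> a = a' \<and> b = b' \<and> c = c'"
  shows "inj_on (\<lambda>(a, b, c). map (f a b c) [0..<n]) (increasing_triples n)"
proof (rule inj_onI)
  fix t t' assume t: "t \<in> increasing_triples n" "t' \<in> increasing_triples n"
    and eq_t: "(\<lambda>(a, b, c). map (f a b c) [0..<n]) t
      = (\<lambda>(a, b, c). map (f a b c) [0..<n]) t'"
  obtain a b c a' b' c' where t_eq: "t = (a, b, c)" "t' = (a', b', c')"
    by (cases t, cases t')
  from eq_t t_eq have eq: "map (f a b c) [0..<n] = map (f a' b' c') [0..<n]"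
    by simp
  have "f a b c i = f a' b' c' i" if "i < n" for i
    using that arg_cong[OF eq, of "\<lambda>x. x ! i"] by simp
  with t t_eq assms[of a b c a' b' c'] show "t = t'"
    by (simp add: increasing_triples_def)
qed

lemma triple_words_not_binary:
  assumes "\<And>a b c. 1 \<le> a \<Longrightarrow> a < b \<Longrightarrow> b < c \<Longrightarrow> 2 \<le> f a b c b" "x \<in> triple_words f n"
  shows "x \<notin> binary_words n"
proof
  assume "x \<in> binary_words n"
  moreover obtain a b c where "1 \<le> a" "a < b" "b < c" "c \<le> n" "x = map (f a b c) [0..<n]"
    using assms(2) by (rule triple_wordsE)
  ultimately show False
    using assms(1) binary_words_nth[of x n b] by fastforce
qed

locale binary_triple_decomposition =
  fixes P :: "nat list set" and f :: "nat \<Rightarrow> nat \<Rightarrow> nat \<Rightarrow> nat \<Rightarrow> nat"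
  assumes patterns_card_set: "p \<in> P \<Longrightarrow> 3 \<le> card (set p)"
    and inj: "inj_on (\<lambda>(a, b, c). map (f a b c) [0..<n]) (increasing_triples n)"
    and ascent: "x \<in> triple_words f n \<Longrightarrow> ascent_seq x"
    and avoid: "x \<in> triple_words f n \<Longrightarrow> p \<in> P \<Longrightarrow> avoids x p"
    and not_binary: "x \<in> triple_words f n \<Longrightarrow> x \<notin> binary_words n"
    and binary_snoc: "x \<in> binary_words n \<Longrightarrow> 2 \<le> v \<Longrightarrow> v \<le> 1 + asc x \<Longrightarrow>
      \<forall>p\<in>P. avoids (x @ [v]) p \<Longrightarrow> x @ [v] \<in> triple_words f (Suc n)"
    and triple_snoc: "x \<in> triple_words f n \<Longrightarrow> v \<le> 1 + asc x \<Longrightarrow>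
      \<forall>p\<in>P. avoids (x @ [v]) p \<Longrightarrow> x @ [v] \<in> triple_words f (Suc n)"
begin

lemma avoiding_ascent_seq_cases:
  "ascent_seq x \<Longrightarrow> \<forall>p\<in>P. avoids x p \<Longrightarrow>
    x \<in> binary_words (length x) \<union> triple_words f (length x)"
proof (induction x rule: rev_induct)
  case Nil
  then show ?case by (simp add: ascent_seq_def)
next
  case (snoc v x)
  show ?case
  proof (cases "x = []")
    case True
    with snoc.prems(1) show ?thesis by (simp add: ascent_seq_def binary_words_def)
  next
    case False
    note ascent = ascent_seq_snocD[OF snoc.prems(1) False]
    have "\<forall>p\<in>P. avoids x p" using snoc.prems(2) avoids_snoc by blast
    with snoc.IH ascent(1) have "x \<in> binary_words (length x) \<union> triple_words f (length x)"
      by blast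
    then show ?thesis
    proof
      assume x: "x \<in> binary_words (length x)"
      show ?thesis
      proof (cases "v \<le> 1")
        case True
        with x False show ?thesis using binary_words_snoc by simp
      next
        case False
        with x ascent(2) snoc.prems(2) show ?thesis using binary_snoc by simp
      qed
    next
      assume "x \<in> triple_words f (length x)"
      with ascent(2) snoc.prems(2) show ?thesis using triple_snoc by simp
    qed
  qed
qed

lemma avoiding_ascent_seqs_eq:
  assumes "1 \<le> n"
  shows "{x. length x = n \<and> ascent_seq x \<and> (\<forall>p\<in>P. avoids x p)}
    = binary_words n \<union> triple_words f n"
proof (intro equalityI subsetI)
  fix x assume "x \<in> {x. length x = n \<and> ascent_seq x \<and> (\<forall>p\<in>P. avoids x p)}"
  then show "x \<in> binary_words n \<union> triple_words f n"
    using avoiding_ascent_seq_cases by blast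
next
  fix x assume "x \<in> binary_words n \<union> triple_words f n"
  then show "x \<in> {x. length x = n \<and> ascent_seq x \<and> (\<forall>p\<in>P. avoids x p)}"
  proof
    assume x: "x \<in> binary_words n"
    then have "ascent_seq x"
      using assms by (intro restricted_growth_imp_ascent_seq binary_words_restricted_growth) auto
    with x show ?thesis
      using binary_words_avoids patterns_card_set by (auto simp: binary_words_def)
  next
    assume "x \<in> triple_words f n"
    then show ?thesis using ascent avoid by (auto elim: triple_wordsE)
  qed
qed

theorem a_count_eq:
  assumes "1 \<le> n"
  shows "a_count P n = 2 ^ (n - 1) + (n choose 3)"
proof -
  have "a_count P n = card (binary_words n \<union> triple_words f n)"
    unfolding a_count_def avoiding_ascent_seqs_eq[OF assms] ..
  also have "\<dots> = card (binary_words n) + card (triple_words f n)"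
    using not_binary by (intro card_Un_disjoint finite_binary_words finite_triple_words) auto
  also have "\<dots> = 2 ^ (n - 1) + (n choose 3)"
    using card_binary_words[of "n - 1"] card_triple_words[OF inj] assms by simp
  finally show ?thesis .
qed

end

section \<open>The three pattern classes\<close>

lemma map_upt_snoc_eq:
  assumes "\<And>i. i < n \<Longrightarrow> g i = f i" "g n = v"
  shows "map f [0..<n] @ [v] = map g [0..<Suc n]"
  using assms by simp

text \<open>The word 0^a 1 2 ... k k^(c-b-1) (k-1)^(n-c) with k = b - a + 1.\<close>

definition stair_drop :: "nat \<Rightarrow> nat \<Rightarrow> nat \<Rightarrow> nat \<Rightarrow> nat" where
  "stair_drop a b c i =
     (if i < a then 0 else if i \<le> b then i - a + 1 else if i < c then b - a + 1 else b - a)"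

lemma asc_stair_drop_le:
  assumes "1 \<le> a" "a < b"
  shows "asc (map (stair_drop a b c) [0..<n]) \<le> b - a + 1"
proof -
  have "asc (map (stair_drop a b c) [0..<n]) \<le> card {a - 1..<b}"
    by (rule asc_le_card) (use assms in \<open>auto simp: stair_drop_def split: if_splits\<close>)
  with assms show ?thesis by simp
qed

lemma stair_drop_snoc_cases:
  assumes abc: "1 \<le> a" "a < b" "b < c" "c \<le> n" and x: "x = map (stair_drop a b c) [0..<n]"
    and v: "v \<le> 1 + asc x"
    and avoid: "avoids (x @ [v]) [0, 1, 0, 2]" "avoids (x @ [v]) [0, 1, 1, 2]"
      "avoids (x @ [v]) [0, 1, 2, 0]"
  shows "v = b - a \<or> (v = b - a + 1 \<and> c = n) \<or> (v = b - a + 2 \<and> b = n - 1 \<and> c = n)"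
proof -
  have x_nth: "x ! i = stair_drop a b c i" if "i < n" for i
    using that by (simp add: x)
  have len: "length x = n" by (simp add: x)
  note no_0102 = avoids_snoc_red_neq[OF avoid(1), unfolded red_0102_iff len]
  note no_0112 = avoids_snoc_red_neq[OF avoid(2), unfolded red_0112_iff len]
  note no_0120 = avoids_snoc_red_neq[OF avoid(3), unfolded red_0120_iff len]
  have "v \<le> b - a + 2" using v asc_stair_drop_le[OF abc(1,2), of c n] x by simp
  then consider "v < b - a" | "v = b - a" | "v = b - a + 1" | "v = b - a + 2" by linarith
  then show ?thesis
  proof cases
    case 1
    moreover have "a + v + 1 < n" using 1 abc by linarith
    ultimately show ?thesis using abc no_0120[of "a + v - 1" "a + v" "a + v + 1"]
      by (auto simp: x_nth stair_drop_def split: if_splits)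
  next
    case 3
    moreover have "b - 2 < b - 1" "b - 1 < c" using abc by linarith+
    ultimately show ?thesis using abc no_0112[of "b - 2" "b - 1" c]
      by (cases "c < n") (auto simp: x_nth stair_drop_def split: if_splits)
  next
    case 4
    with abc no_0102[of "b - 1" b c] no_0112[of "b - 1" b "b + 1"] show ?thesis
      by (cases "c < n"; cases "b + 1 < n") (auto simp: x_nth stair_drop_def split: if_splits)
  qed simp
qed

lemma stair_drop_triple_snoc:
  assumes x: "x \<in> triple_words stair_drop n" and v: "v \<le> 1 + asc x"
    and avoid: "avoids (x @ [v]) [0, 1, 0, 2]" "avoids (x @ [v]) [0, 1, 1, 2]"
      "avoids (x @ [v]) [0, 1, 2, 0]"
  shows "x @ [v] \<in> triple_words stair_drop (Suc n)"
proof -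
  obtain a b c where abc: "1 \<le> a" "a < b" "b < c" "c \<le> n"
    and x_eq: "x = map (stair_drop a b c) [0..<n]"
    using x by (rule triple_wordsE)
  from stair_drop_snoc_cases[OF abc x_eq v avoid]
  consider "v = b - a" | "v = b - a + 1" "c = n" | "v = b - a + 2" "b = n - 1" "c = n"
    by blast
  then show ?thesis
  proof cases
    case 1
    have "x @ [v] = map (stair_drop a b c) [0..<Suc n]"
      unfolding x_eq by (rule map_upt_snoc_eq) (use 1 abc in \<open>auto simp: stair_drop_def\<close>)
    then show ?thesis using abc triple_wordsI[of a b c "Suc n"] by simp
  next
    case 2
    have "x @ [v] = map (stair_drop a b (Suc n)) [0..<Suc n]"
      unfolding x_eq by (rule map_upt_snoc_eq) (use 2 abc in \<open>auto simp: stair_drop_def\<close>)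
    then show ?thesis using abc triple_wordsI[of a b "Suc n" "Suc n"] by simp
  next
    case 3
    have "x @ [v] = map (stair_drop a n (Suc n)) [0..<Suc n]"
      unfolding x_eq by (rule map_upt_snoc_eq) (use 3 abc in \<open>auto simp: stair_drop_def\<close>)
    then show ?thesis using abc triple_wordsI[of a n "Suc n" "Suc n"] by simp
  qed
qed

lemma stair_drop_binary_snoc:
  assumes x: "x \<in> binary_words n" and v: "2 \<le> v" "v \<le> 1 + asc x"
    and avoid: "avoids (x @ [v]) [0, 1, 0, 2]" "avoids (x @ [v]) [0, 1, 1, 2]"
  shows "x @ [v] \<in> triple_words stair_drop (Suc n)"
proof -
  note shape = binary_words_snoc_avoiding_0102_0112[OF x v avoid]
  have len: "length x = n" and "x ! 0 = 0" using x by (auto simp: binary_words_def)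
  with shape(2) have "2 \<le> n" by (cases "n - 1") auto
  have "x @ [v] = map (stair_drop (n - 1) n (Suc n)) [0..<Suc n]"
  proof (rule nth_equalityI)
    fix i assume "i < length (x @ [v])"
    with len have "i < Suc n" by simp
    then consider "i < n - 1" | "i = n - 1" | "i = n" by linarith
    then show "(x @ [v]) ! i = map (stair_drop (n - 1) n (Suc n)) [0..<Suc n] ! i"
      by cases (use shape \<open>2 \<le> n\<close> len in \<open>auto simp: nth_append stair_drop_def\<close>)
  qed (simp add: len)
  then show ?thesis using \<open>2 \<le> n\<close> triple_wordsI[of "n - 1" n "Suc n" "Suc n"] by simp
qed

lemma stair_drop_params_eq:
  assumes abc: "1 \<le> a" "a < b" "b < c" "1 \<le> a'" "a' < b'" "b' < c'" "c \<le> n" "c' \<le> n"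
    and same: "\<And>i. i < n \<Longrightarrow> stair_drop a b c i = stair_drop a' b' c' i"
  shows "a = a' \<and> b = b' \<and> c = c'"
proof -
  have "a = a'"
    using same[of "min a a'"] abc
    by (cases a a' rule: linorder_cases) (auto simp: stair_drop_def min_def split: if_splits)
  moreover from this have "b = b'"
    using same[of "Suc (min b b')"] abc
    by (cases b b' rule: linorder_cases) (auto simp: stair_drop_def min_def split: if_splits)
  moreover from calculation have "c = c'"
    using same[of "min c c'"] abc
    by (cases c c' rule: linorder_cases) (auto simp: stair_drop_def min_def split: if_splits)
  ultimately show ?thesis by blast
qed

lemma stair_drop_restricted_growth:
  assumes "1 \<le> a" "a < b" "b < c" "c \<le> n"
  shows "restricted_growth (map (stair_drop a b c) [0..<n])"
proof -
  have "\<exists>j<i. stair_drop a b c i \<le> stair_drop a b c j + 1" if "0 < i" for i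
    using that by (intro exI[of _ "i - 1"]) (auto simp: stair_drop_def)
  moreover have "stair_drop a b c 0 = 0" using assms by (simp add: stair_drop_def)
  ultimately show ?thesis using assms by (intro restricted_growth_map_upt) auto
qed

lemma stair_drop_avoids:
  assumes "a < b"
  shows "avoids (map (stair_drop a b c) [0..<n]) [0, 1, 0, 2]"
    "avoids (map (stair_drop a b c) [0..<n]) [0, 1, 1, 2]"
    "avoids (map (stair_drop a b c) [0..<n]) [0, 1, 2, 0]"
  unfolding avoids_0102_iff avoids_0112_iff avoids_0120_iff
  using assms by (auto simp: stair_drop_def split: if_splits)

interpretation stair_drop: binary_triple_decomposition
  "{[0, 1, 0, 2], [0, 1, 1, 2], [0, 1, 2, 0]}" stair_drop
proof
  show "3 \<le> card (set p)" if "p \<in> {[0, 1, 0, 2], [0, 1, 1, 2], [0, 1, 2, 0]}" for p :: "nat list"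
    using that by (auto simp: card_insert_if)
  show "inj_on (\<lambda>(a, b, c). map (stair_drop a b c) [0..<n]) (increasing_triples n)" for n
    by (rule inj_on_triple_wordsI) (use stair_drop_params_eq in blast)
  show "ascent_seq x" if "x \<in> triple_words stair_drop n" for x n
    using that by (elim triple_wordsE)
      (simp add: restricted_growth_imp_ascent_seq stair_drop_restricted_growth)
  show "avoids x p"
    if x: "x \<in> triple_words stair_drop n"
      and p: "p \<in> {[0, 1, 0, 2], [0, 1, 1, 2], [0, 1, 2, 0]}" for x n p
  proof -
    obtain a b c where "a < b" "x = map (stair_drop a b c) [0..<n]"
      using x by (rule triple_wordsE)
    with p stair_drop_avoids[of a b c n] show ?thesis by auto
  qed
  show "x \<notin> binary_words n" if "x \<in> triple_words stair_drop n" for x n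
    using that by (rule triple_words_not_binary[rotated]) (simp add: stair_drop_def)
  show "x @ [v] \<in> triple_words stair_drop (Suc n)"
    if "x \<in> binary_words n" "2 \<le> v" "v \<le> 1 + asc x"
      "\<forall>p\<in>{[0, 1, 0, 2], [0, 1, 1, 2], [0, 1, 2, 0]}. avoids (x @ [v]) p" for x n v
    using that by (intro stair_drop_binary_snoc) auto
  show "x @ [v] \<in> triple_words stair_drop (Suc n)"
    if "x \<in> triple_words stair_drop n" "v \<le> 1 + asc x"
      "\<forall>p\<in>{[0, 1, 0, 2], [0, 1, 1, 2], [0, 1, 2, 0]}. avoids (x @ [v]) p" for x n v
    using that by (intro stair_drop_triple_snoc) auto
qed

text \<open>The word 0^a 1 2 ... k k^(c-b-1) 0^(n-c) with k = b - a + 1.\<close>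

definition stair_reset :: "nat \<Rightarrow> nat \<Rightarrow> nat \<Rightarrow> nat \<Rightarrow> nat" where
  "stair_reset a b c i =
     (if i < a then 0 else if i \<le> b then i - a + 1 else if i < c then b - a + 1 else 0)"

lemma asc_stair_reset_le:
  assumes "1 \<le> a" "a < b"
  shows "asc (map (stair_reset a b c) [0..<n]) \<le> b - a + 1"
proof -
  have "asc (map (stair_reset a b c) [0..<n]) \<le> card {a - 1..<b}"
    by (rule asc_le_card) (use assms in \<open>auto simp: stair_reset_def split: if_splits\<close>)
  with assms show ?thesis by simp
qed

lemma stair_reset_snoc_cases:
  assumes abc: "1 \<le> a" "a < b" "b < c" "c \<le> n" and x: "x = map (stair_reset a b c) [0..<n]"
    and v: "v \<le> 1 + asc x"
    and avoid: "avoids (x @ [v]) [0, 1, 0, 2]" "avoids (x @ [v]) [0, 1, 1, 2]"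
      "avoids (x @ [v]) [0, 1, 2, 1]"
  shows "v = 0 \<or> (v = b - a + 1 \<and> c = n) \<or> (v = b - a + 2 \<and> b = n - 1 \<and> c = n)"
proof -
  have x_nth: "x ! i = stair_reset a b c i" if "i < n" for i
    using that by (simp add: x)
  have len: "length x = n" by (simp add: x)
  note no_0102 = avoids_snoc_red_neq[OF avoid(1), unfolded red_0102_iff len]
  note no_0112 = avoids_snoc_red_neq[OF avoid(2), unfolded red_0112_iff len]
  note no_0121 = avoids_snoc_red_neq[OF avoid(3), unfolded red_0121_iff len]
  have "v \<le> b - a + 2" using v asc_stair_reset_le[OF abc(1,2), of c n] x by simp
  then consider "v = 0" | "0 < v" "v \<le> b - a" | "v = b - a + 1" | "v = b - a + 2" by linarith
  then show ?thesis
  proof cases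
    case 2
    moreover have "0 < a + v - 1" "a + v < n" using 2 abc by linarith+
    ultimately show ?thesis using abc no_0121[of 0 "a + v - 1" "a + v"]
      by (auto simp: x_nth stair_reset_def split: if_splits)
  next
    case 3
    moreover have "0 < a" "a < c" using abc by linarith+
    ultimately show ?thesis using abc no_0102[of 0 a c]
      by (cases "c < n") (auto simp: x_nth stair_reset_def split: if_splits)
  next
    case 4
    moreover have "0 < a" "a < c" "b - 1 < b" using abc by linarith+
    ultimately show ?thesis using abc no_0102[of 0 a c] no_0112[of "b - 1" b "b + 1"]
      by (cases "c < n"; cases "b + 1 < n") (auto simp: x_nth stair_reset_def split: if_splits)
  qed simp
qed

lemma stair_reset_triple_snoc:
  assumes x: "x \<in> triple_words stair_reset n" and v: "v \<le> 1 + asc x"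
    and avoid: "avoids (x @ [v]) [0, 1, 0, 2]" "avoids (x @ [v]) [0, 1, 1, 2]"
      "avoids (x @ [v]) [0, 1, 2, 1]"
  shows "x @ [v] \<in> triple_words stair_reset (Suc n)"
proof -
  obtain a b c where abc: "1 \<le> a" "a < b" "b < c" "c \<le> n"
    and x_eq: "x = map (stair_reset a b c) [0..<n]"
    using x by (rule triple_wordsE)
  from stair_reset_snoc_cases[OF abc x_eq v avoid]
  consider "v = 0" | "v = b - a + 1" "c = n" | "v = b - a + 2" "b = n - 1" "c = n"
    by blast
  then show ?thesis
  proof cases
    case 1
    have "x @ [v] = map (stair_reset a b c) [0..<Suc n]"
      unfolding x_eq by (rule map_upt_snoc_eq) (use 1 abc in \<open>auto simp: stair_reset_def\<close>)
    then show ?thesis using abc triple_wordsI[of a b c "Suc n"] by simp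
  next
    case 2
    have "x @ [v] = map (stair_reset a b (Suc n)) [0..<Suc n]"
      unfolding x_eq by (rule map_upt_snoc_eq) (use 2 abc in \<open>auto simp: stair_reset_def\<close>)
    then show ?thesis using abc triple_wordsI[of a b "Suc n" "Suc n"] by simp
  next
    case 3
    have "x @ [v] = map (stair_reset a n (Suc n)) [0..<Suc n]"
      unfolding x_eq by (rule map_upt_snoc_eq) (use 3 abc in \<open>auto simp: stair_reset_def\<close>)
    then show ?thesis using abc triple_wordsI[of a n "Suc n" "Suc n"] by simp
  qed
qed

lemma stair_reset_binary_snoc:
  assumes x: "x \<in> binary_words n" and v: "2 \<le> v" "v \<le> 1 + asc x"
    and avoid: "avoids (x @ [v]) [0, 1, 0, 2]" "avoids (x @ [v]) [0, 1, 1, 2]"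
  shows "x @ [v] \<in> triple_words stair_reset (Suc n)"
proof -
  note shape = binary_words_snoc_avoiding_0102_0112[OF x v avoid]
  have len: "length x = n" and "x ! 0 = 0" using x by (auto simp: binary_words_def)
  with shape(2) have "2 \<le> n" by (cases "n - 1") auto
  have "x @ [v] = map (stair_reset (n - 1) n (Suc n)) [0..<Suc n]"
  proof (rule nth_equalityI)
    fix i assume "i < length (x @ [v])"
    with len have "i < Suc n" by simp
    then consider "i < n - 1" | "i = n - 1" | "i = n" by linarith
    then show "(x @ [v]) ! i = map (stair_reset (n - 1) n (Suc n)) [0..<Suc n] ! i"
      by cases (use shape \<open>2 \<le> n\<close> len in \<open>auto simp: nth_append stair_reset_def\<close>)
  qed (simp add: len)
  then show ?thesis using \<open>2 \<le> n\<close> triple_wordsI[of "n - 1" n "Suc n" "Suc n"] by simp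
qed

lemma stair_reset_params_eq:
  assumes abc: "1 \<le> a" "a < b" "b < c" "1 \<le> a'" "a' < b'" "b' < c'" "c \<le> n" "c' \<le> n"
    and same: "\<And>i. i < n \<Longrightarrow> stair_reset a b c i = stair_reset a' b' c' i"
  shows "a = a' \<and> b = b' \<and> c = c'"
proof -
  have "a = a'"
    using same[of "min a a'"] abc
    by (cases a a' rule: linorder_cases) (auto simp: stair_reset_def min_def split: if_splits)
  moreover from this have "b = b'"
    using same[of "Suc (min b b')"] abc
    by (cases b b' rule: linorder_cases) (auto simp: stair_reset_def min_def split: if_splits)
  moreover from calculation have "c = c'"
    using same[of "min c c'"] abc
    by (cases c c' rule: linorder_cases) (auto simp: stair_reset_def min_def split: if_splits)
  ultimately show ?thesis by blast
qed

lemma stair_reset_restricted_growth: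
  assumes "1 \<le> a" "a < b" "b < c" "c \<le> n"
  shows "restricted_growth (map (stair_reset a b c) [0..<n])"
proof -
  have "\<exists>j<i. stair_reset a b c i \<le> stair_reset a b c j + 1" if "0 < i" for i
    using that by (intro exI[of _ "i - 1"]) (auto simp: stair_reset_def)
  moreover have "stair_reset a b c 0 = 0" using assms by (simp add: stair_reset_def)
  ultimately show ?thesis using assms by (intro restricted_growth_map_upt) auto
qed

lemma stair_reset_avoids:
  assumes "a < b"
  shows "avoids (map (stair_reset a b c) [0..<n]) [0, 1, 0, 2]"
    "avoids (map (stair_reset a b c) [0..<n]) [0, 1, 1, 2]"
    "avoids (map (stair_reset a b c) [0..<n]) [0, 1, 2, 1]"
  unfolding avoids_0102_iff avoids_0112_iff avoids_0121_iff
  using assms by (auto simp: stair_reset_def split: if_splits)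

interpretation stair_reset: binary_triple_decomposition
  "{[0, 1, 0, 2], [0, 1, 1, 2], [0, 1, 2, 1]}" stair_reset
proof
  show "3 \<le> card (set p)" if "p \<in> {[0, 1, 0, 2], [0, 1, 1, 2], [0, 1, 2, 1]}" for p :: "nat list"
    using that by (auto simp: card_insert_if)
  show "inj_on (\<lambda>(a, b, c). map (stair_reset a b c) [0..<n]) (increasing_triples n)" for n
    by (rule inj_on_triple_wordsI) (use stair_reset_params_eq in blast)
  show "ascent_seq x" if "x \<in> triple_words stair_reset n" for x n
    using that by (elim triple_wordsE)
      (simp add: restricted_growth_imp_ascent_seq stair_reset_restricted_growth)
  show "avoids x p"
    if x: "x \<in> triple_words stair_reset n"
      and p: "p \<in> {[0, 1, 0, 2], [0, 1, 1, 2], [0, 1, 2, 1]}" for x n p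
  proof -
    obtain a b c where "a < b" "x = map (stair_reset a b c) [0..<n]"
      using x by (rule triple_wordsE)
    with p stair_reset_avoids[of a b c n] show ?thesis by auto
  qed
  show "x \<notin> binary_words n" if "x \<in> triple_words stair_reset n" for x n
    using that by (rule triple_words_not_binary[rotated]) (simp add: stair_reset_def)
  show "x @ [v] \<in> triple_words stair_reset (Suc n)"
    if "x \<in> binary_words n" "2 \<le> v" "v \<le> 1 + asc x"
      "\<forall>p\<in>{[0, 1, 0, 2], [0, 1, 1, 2], [0, 1, 2, 1]}. avoids (x @ [v]) p" for x n v
    using that by (intro stair_reset_binary_snoc) auto
  show "x @ [v] \<in> triple_words stair_reset (Suc n)"
    if "x \<in> triple_words stair_reset n" "v \<le> 1 + asc x"
      "\<forall>p\<in>{[0, 1, 0, 2], [0, 1, 1, 2], [0, 1, 2, 1]}. avoids (x @ [v]) p" for x n v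
    using that by (intro stair_reset_triple_snoc) auto
qed

text \<open>The word 0^a 1 0^(b-a-1) 2 3 ... k k^(n-c) with k = c - b + 1.\<close>

definition spike_stair :: "nat \<Rightarrow> nat \<Rightarrow> nat \<Rightarrow> nat \<Rightarrow> nat" where
  "spike_stair a b c i =
     (if i < a then 0 else if i = a then 1 else if i < b then 0
      else if i < c then i - b + 2 else c - b + 1)"

lemma asc_spike_stair_le:
  assumes "1 \<le> a" "a < b" "b < c"
  shows "asc (map (spike_stair a b c) [0..<n]) \<le> c - b + 1"
proof -
  have "asc (map (spike_stair a b c) [0..<n]) \<le> card (insert (a - 1) {b - 1..<c - 1})"
    by (rule asc_le_card) (use assms in \<open>auto simp: spike_stair_def split: if_splits\<close>)
  also have "\<dots> \<le> Suc (card {b - 1..<c - 1})" by (simp add: card_insert_if)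
  finally show ?thesis using assms by simp
qed

lemma spike_stair_snoc_cases:
  assumes abc: "1 \<le> a" "a < b" "b < c" "c \<le> n" and x: "x = map (spike_stair a b c) [0..<n]"
    and v: "v \<le> 1 + asc x"
    and avoid: "avoids (x @ [v]) [0, 1, 1, 2]" "avoids (x @ [v]) [0, 1, 2, 0]"
      "avoids (x @ [v]) [0, 1, 2, 1]"
  shows "v = c - b + 1 \<or> (v = c - b + 2 \<and> c = n)"
proof -
  have x_nth: "x ! i = spike_stair a b c i" if "i < n" for i
    using that by (simp add: x)
  have len: "length x = n" by (simp add: x)
  note no_0112 = avoids_snoc_red_neq[OF avoid(1), unfolded red_0112_iff len]
  note no_0120 = avoids_snoc_red_neq[OF avoid(2), unfolded red_0120_iff len]
  note no_0121 = avoids_snoc_red_neq[OF avoid(3), unfolded red_0121_iff len]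
  have "v \<le> c - b + 2" using v asc_spike_stair_le[OF abc(1-3), of n] x by simp
  moreover have "0 < a" "b < n" using abc by linarith+
  ultimately consider "v = 0" | "v = 1" | "2 \<le> v" "v \<le> c - b" | "v = c - b + 1" | "v = c - b + 2"
    by linarith
  then show ?thesis
  proof cases
    case 1
    with abc \<open>0 < a\<close> \<open>b < n\<close> no_0120[of 0 a b] show ?thesis
      by (auto simp: x_nth spike_stair_def)
  next
    case 2
    with abc \<open>0 < a\<close> \<open>b < n\<close> no_0121[of 0 a b] show ?thesis
      by (auto simp: x_nth spike_stair_def)
  next
    case 3
    moreover have "0 < b + v - 2" "b + v - 2 < b + v - 1" "b + v - 1 < n"
      using 3 abc by linarith+
    ultimately show ?thesis using abc no_0121[of 0 "b + v - 2" "b + v - 1"]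
      by (auto simp: x_nth spike_stair_def split: if_splits)
  next
    case 5
    moreover have "0 < c - 1" "c - 1 < c" using abc by linarith+
    ultimately show ?thesis using abc no_0112[of 0 "c - 1" c]
      by (cases "c < n") (auto simp: x_nth spike_stair_def split: if_splits)
  qed simp
qed

lemma spike_stair_triple_snoc:
  assumes x: "x \<in> triple_words spike_stair n" and v: "v \<le> 1 + asc x"
    and avoid: "avoids (x @ [v]) [0, 1, 1, 2]" "avoids (x @ [v]) [0, 1, 2, 0]"
      "avoids (x @ [v]) [0, 1, 2, 1]"
  shows "x @ [v] \<in> triple_words spike_stair (Suc n)"
proof -
  obtain a b c where abc: "1 \<le> a" "a < b" "b < c" "c \<le> n"
    and x_eq: "x = map (spike_stair a b c) [0..<n]"
    using x by (rule triple_wordsE)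
  from spike_stair_snoc_cases[OF abc x_eq v avoid]
  consider "v = c - b + 1" | "v = c - b + 2" "c = n"
    by blast
  then show ?thesis
  proof cases
    case 1
    have "x @ [v] = map (spike_stair a b c) [0..<Suc n]"
      unfolding x_eq by (rule map_upt_snoc_eq) (use 1 abc in \<open>auto simp: spike_stair_def\<close>)
    then show ?thesis using abc triple_wordsI[of a b c "Suc n"] by simp
  next
    case 2
    have "x @ [v] = map (spike_stair a b (Suc n)) [0..<Suc n]"
      unfolding x_eq by (rule map_upt_snoc_eq) (use 2 abc in \<open>auto simp: spike_stair_def\<close>)
    then show ?thesis using abc triple_wordsI[of a b "Suc n" "Suc n"] by simp
  qed
qed

lemma spike_stair_binary_snoc:
  assumes x: "x \<in> binary_words n" and v: "2 \<le> v" "v \<le> 1 + asc x"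
    and avoid: "avoids (x @ [v]) [0, 1, 1, 2]"
  shows "x @ [v] \<in> triple_words spike_stair (Suc n)"
proof -
  obtain q where q: "0 < q" "q < n" "x ! q = 1" "\<And>i. i < n \<Longrightarrow> i \<noteq> q \<Longrightarrow> x ! i = 0"
    and "v = 2"
    using binary_words_snoc_avoiding_0112[OF x v avoid] by blast
  have len: "length x = n" using x by (simp add: binary_words_def)
  have "x @ [v] = map (spike_stair q n (Suc n)) [0..<Suc n]"
  proof (rule nth_equalityI)
    fix i assume "i < length (x @ [v])"
    with len have "i < Suc n" by simp
    then consider "i < n" "i \<noteq> q" | "i = q" | "i = n" using q by linarith
    then show "(x @ [v]) ! i = map (spike_stair q n (Suc n)) [0..<Suc n] ! i"
      by cases (use q \<open>v = 2\<close> len in \<open>auto simp: nth_append spike_stair_def\<close>)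
  qed (simp add: len)
  then show ?thesis using q triple_wordsI[of q n "Suc n" "Suc n"] by simp
qed

lemma spike_stair_params_eq:
  assumes abc: "1 \<le> a" "a < b" "b < c" "1 \<le> a'" "a' < b'" "b' < c'" "c \<le> n" "c' \<le> n"
    and same: "\<And>i. i < n \<Longrightarrow> spike_stair a b c i = spike_stair a' b' c' i"
  shows "a = a' \<and> b = b' \<and> c = c'"
proof -
  have "a = a'"
    using same[of "min a a'"] abc
    by (cases a a' rule: linorder_cases) (auto simp: spike_stair_def min_def split: if_splits)
  moreover from this have "b = b'"
    using same[of "min b b'"] abc
    by (cases b b' rule: linorder_cases) (auto simp: spike_stair_def min_def split: if_splits)
  moreover from calculation have "c = c'"
    using same[of "min c c'"] abc
    by (cases c c' rule: linorder_cases) (auto simp: spike_stair_def min_def split: if_splits)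
  ultimately show ?thesis by blast
qed

lemma spike_stair_restricted_growth:
  assumes "1 \<le> a" "a < b" "b < c" "c \<le> n"
  shows "restricted_growth (map (spike_stair a b c) [0..<n])"
proof -
  have "\<exists>j<i. spike_stair a b c i \<le> spike_stair a b c j + 1" if "0 < i" for i
  proof (cases "i = b")
    case True
    with assms show ?thesis by (intro exI[of _ a]) (simp add: spike_stair_def)
  next
    case False
    with that assms show ?thesis by (intro exI[of _ "i - 1"]) (auto simp: spike_stair_def)
  qed
  moreover have "spike_stair a b c 0 = 0" using assms by (simp add: spike_stair_def)
  ultimately show ?thesis using assms by (intro restricted_growth_map_upt) auto
qed

lemma spike_stair_avoids:
  assumes "a < b" "b < c"
  shows "avoids (map (spike_stair a b c) [0..<n]) [0, 1, 1, 2]"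
    "avoids (map (spike_stair a b c) [0..<n]) [0, 1, 2, 0]"
    "avoids (map (spike_stair a b c) [0..<n]) [0, 1, 2, 1]"
  unfolding avoids_0112_iff avoids_0120_iff avoids_0121_iff
  using assms by (auto simp: spike_stair_def split: if_splits)

interpretation spike_stair: binary_triple_decomposition
  "{[0, 1, 1, 2], [0, 1, 2, 0], [0, 1, 2, 1]}" spike_stair
proof
  show "3 \<le> card (set p)" if "p \<in> {[0, 1, 1, 2], [0, 1, 2, 0], [0, 1, 2, 1]}" for p :: "nat list"
    using that by (auto simp: card_insert_if)
  show "inj_on (\<lambda>(a, b, c). map (spike_stair a b c) [0..<n]) (increasing_triples n)" for n
    by (rule inj_on_triple_wordsI) (use spike_stair_params_eq in blast)
  show "ascent_seq x" if "x \<in> triple_words spike_stair n" for x n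
    using that by (elim triple_wordsE)
      (simp add: restricted_growth_imp_ascent_seq spike_stair_restricted_growth)
  show "avoids x p"
    if x: "x \<in> triple_words spike_stair n"
      and p: "p \<in> {[0, 1, 1, 2], [0, 1, 2, 0], [0, 1, 2, 1]}" for x n p
  proof -
    obtain a b c where "a < b" "b < c" "x = map (spike_stair a b c) [0..<n]"
      using x by (rule triple_wordsE)
    with p spike_stair_avoids[of a b c n] show ?thesis by auto
  qed
  show "x \<notin> binary_words n" if "x \<in> triple_words spike_stair n" for x n
    using that by (rule triple_words_not_binary[rotated]) (simp add: spike_stair_def)
  show "x @ [v] \<in> triple_words spike_stair (Suc n)"
    if "x \<in> binary_words n" "2 \<le> v" "v \<le> 1 + asc x"
      "\<forall>p\<in>{[0, 1, 1, 2], [0, 1, 2, 0], [0, 1, 2, 1]}. avoids (x @ [v]) p" for x n v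
    using that by (intro spike_stair_binary_snoc) auto
  show "x @ [v] \<in> triple_words spike_stair (Suc n)"
    if "x \<in> triple_words spike_stair n" "v \<le> 1 + asc x"
      "\<forall>p\<in>{[0, 1, 1, 2], [0, 1, 2, 0], [0, 1, 2, 1]}. avoids (x @ [v]) p" for x n v
    using that by (intro spike_stair_triple_snoc) auto
qed

theorem theorem4p2:
  fixes n :: nat
  assumes "n \<ge> 1"
  shows "a_count {[0,1,0,2], [0,1,1,2], [0,1,2,0]} n = 2 ^ (n - 1) + (n choose 3)
       \<and> a_count {[0,1,0,2], [0,1,1,2], [0,1,2,1]} n = 2 ^ (n - 1) + (n choose 3)
       \<and> a_count {[0,1,1,2], [0,1,2,0], [0,1,2,1]} n = 2 ^ (n - 1) + (n choose 3)"
  using stair_drop.a_count_eq[OF assms] stair_reset.a_count_eq[OF assms]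
    spike_stair.a_count_eq[OF assms] by simp

end
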